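(* Let $V$ be an $n$-dimensional complex vector space with complete flag $F_\bullet$, let $U\subseteq V$ be an $r$-dimensional subspace lying in the Schubert variety $\Omega_I(F_\bullet)\subseteq\mathrm{Gr}(r,V)$ for some $r$-element $I\subseteq[n]$, and let $W=V/U$. (i) If $X\subseteq U$ is a subspace of dimension $x$ with $X\in\Omega_P(F_\bullet U)\subseteq\mathrm{Gr}(x,U)$ for an $x$-element $P\subseteq[r]$, then $X\in\Omega_{I_P}(F_\bullet)\subseteq\mathrm{Gr}(x,V)$. (ii) If $Y\subseteq W$ is a subspace of dimension $y$ with $Y\in\Omega_P(F_\bullet W)\subseteq\mathrm{Gr}(y,W)$ for a $y$-element $P\subseteq[n-r]$, and $Y=Z/U$ with $U\subseteq Z\subseteq V$, then $Z\in\Omega_{I^+_P}(F_\bullet)\subseteq\mathrm{Gr}(r+y,V)$.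
   Context: $[n]=\{1,\dots,n\}$. A complete flag in an $N$-dimensional space $E$ is $0=F_0\subset F_1\subset\cdots\subset F_N=E$ with $\dim F_i=i$. For $J=\{j_1<\dots<j_k\}\subseteq[N]$, $\Omega_J(F_\bullet)=\{L\in\mathrm{Gr}(k,E):\dim(L\cap F_{j_a})\ge a,\ 1\le a\le k\}$; the Schubert cell $\Omega^\circ_J(F_\bullet)$ is the set of $k$-dimensional $L$ with $\{i\in[N]: L\cap F_i\ne L\cap F_{i-1}\}=J$. Induced flags: let $H=\{h_1<\dots<h_r\}$ be the set with $U\in\Omega^\circ_H(F_\bullet)$ and $H^c=[n]\setminus H=\{h^c_1<\dots<h^c_{n-r}\}$; then $F_kU=F_{h_k}\cap U$ ($1\le k\le r$) and $F_kW=(U+F_{h^c_k})/U$ ($1\le k\le n-r$). For $I=\{i_1<\dots<i_r\}$ and $P=\{p_1<\dots<p_x\}\subseteq[r]$, $I_P=\{i_{p_1}<\dots<i_{p_x}\}$; for $P\subseteq[n-r]$, $I^+_P=I\cup\{i^c_p:p\in P\}$ where $[n]\setminus I=\{i^c_1<\dots<i^c_{n-r}\}$. *)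

theory Defs
  imports "HOL-Analysis.Analysis"
begin

text \<open>The ambient n-dimensional complex vector space V is modelled as complex^'n,
  with n = CARD('n); linear algebra over the complex scalars via the interpretation vec.\<close>

text \<open>a-th smallest element (1-indexed) of a finite set of naturals.\<close>
definition ith :: "nat set \<Rightarrow> nat \<Rightarrow> nat" where
  "ith J a = sorted_list_of_set J ! (a - 1)"

definition complete_flag :: "nat \<Rightarrow> (nat \<Rightarrow> (complex^'n) set) \<Rightarrow> bool" where
  "complete_flag N F \<longleftrightarrow> N = CARD('n) \<and> F 0 = {0} \<and> F N = UNIV \<and>
     (\<forall>i\<le>N. vec.subspace (F i) \<and> vec.dim (F i) = i) \<and>
     (\<forall>i<N. F i \<subseteq> F (Suc i))"

definition schubert :: "(nat \<Rightarrow> (complex^'n) set) \<Rightarrow> nat set \<Rightarrow> nat \<Rightarrow> (complex^'n) set \<Rightarrow> bool" where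
  "schubert G J k L \<longleftrightarrow> finite J \<and> card J = k \<and> vec.subspace L \<and> vec.dim L = k \<and>
     (\<forall>a\<in>{1..k}. a \<le> vec.dim (L \<inter> G (ith J a)))"

text \<open>The set H with L in the Schubert cell Omega^o_H(F).\<close>
definition jumps :: "(nat \<Rightarrow> (complex^'n) set) \<Rightarrow> nat \<Rightarrow> (complex^'n) set \<Rightarrow> nat set" where
  "jumps F N L = {i\<in>{1..N}. L \<inter> F i \<noteq> L \<inter> F (i - 1)}"

definition flagU :: "(nat \<Rightarrow> (complex^'n) set) \<Rightarrow> nat \<Rightarrow> (complex^'n) set \<Rightarrow> nat \<Rightarrow> (complex^'n) set" where
  "flagU F N U k = F (ith (jumps F N U) k) \<inter> U"

text \<open>Induced flag on W = V/U, represented by preimages in V: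
  F_k W = (U + F_{h^c_k})/U is represented by U + F_{h^c_k}.\<close>
definition flagW_pre :: "(nat \<Rightarrow> (complex^'n) set) \<Rightarrow> nat \<Rightarrow> (complex^'n) set \<Rightarrow> nat \<Rightarrow> (complex^'n) set" where
  "flagW_pre F N U k = vec.span (U \<union> F (ith ({1..N} - jumps F N U) k))"

text \<open>Schubert variety in the quotient W = V/U, via the correspondence between subspaces
  Y = Z/U of W and subspaces Z of V containing U; dim (Z/U) = dim Z - dim U and
  (Z/U) \<inter> (G/U) = (Z \<inter> G)/U for subspaces Z, G containing U.\<close>
definition schubert_quot :: "(complex^'n) set \<Rightarrow> (nat \<Rightarrow> (complex^'n) set) \<Rightarrow> nat set \<Rightarrow> nat \<Rightarrow> (complex^'n) set \<Rightarrow> bool" where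
  "schubert_quot U G J k Z \<longleftrightarrow> finite J \<and> card J = k \<and> vec.subspace Z \<and> U \<subseteq> Z \<and>
     vec.dim Z - vec.dim U = k \<and>
     (\<forall>a\<in>{1..k}. a \<le> vec.dim (Z \<inter> G (ith J a)) - vec.dim U)"

definition idx_sub :: "nat set \<Rightarrow> nat set \<Rightarrow> nat set" where
  "idx_sub I P = ith I ` P"

definition idx_plus :: "nat \<Rightarrow> nat set \<Rightarrow> nat set \<Rightarrow> nat set" where
  "idx_plus N I P = I \<union> ith ({1..N} - I) ` P"

end

theory Submission
  imports Defs
begin

text \<open>
  Write \<open>#{J \<le> j}\<close> for the number of elements of \<open>J\<close> that are at most \<open>j\<close>. Since \<open>dim (L \<inter> F j)\<close>
  is monotone in \<open>j\<close>, \<open>L \<in> \<Omega>\<^sub>J(F)\<close> holds iff \<open>#{J \<le> j} \<le> dim (L \<inter> F j)\<close> for all \<open>j\<close>; and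
  for an increasing enumeration, \<open>#{J\<^sub>P \<le> j} = #{p \<in> P. p \<le> #{J \<le> j}}\<close>.
  If \<open>H\<close> is the jump set of \<open>U\<close>, then \<open>dim (U \<inter> F j) = #{H \<le> j}\<close>, so \<open>U \<in> \<Omega>\<^sub>I(F)\<close> says
  \<open>#{I \<le> j} \<le> #{H \<le> j}\<close>. Part (i) follows, as \<open>#{p \<in> P. p \<le> m}\<close> is monotone in \<open>m\<close>.
  For part (ii), \<open>#{I\<^sup>+\<^sub>P \<le> j} = e + #{p \<in> P. p \<le> j - e}\<close> with \<open>e = #{I \<le> j}\<close>, and this
  expression is nondecreasing in \<open>e\<close>, so we may replace \<open>I\<close> by \<open>H\<close>; the resulting bound
  \<open>#{H \<le> j} + dim (Z \<inter> (U + F j)) - dim U\<close> is at most \<open>dim (Z \<inter> F j)\<close> by the modular law.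
\<close>

section \<open>Enumerating finite sets of naturals\<close>

lemma ith_mem: "finite J \<Longrightarrow> a \<in> {1..card J} \<Longrightarrow> ith J a \<in> J"
  unfolding ith_def using nth_mem[of "a - 1" "sorted_list_of_set J"] by auto

lemma strict_mono_on_ith: "finite J \<Longrightarrow> strict_mono_on {1..card J} (ith J)"
proof (rule strict_mono_onI)
  fix a b assume "finite J" "a \<in> {1..card J}" "b \<in> {1..card J}" "a < b"
  then show "ith J a < ith J b"
    unfolding ith_def
    using sorted_wrt_nth_less[OF strict_sorted_list_of_set[of J], of "a - 1" "b - 1"] by simp
qed

lemma ith_surj: "finite J \<Longrightarrow> j \<in> J \<Longrightarrow> \<exists>a\<in>{1..card J}. ith J a = j"
  unfolding ith_def
  by (metis Suc_leI atLeastAtMost_iff diff_Suc_1 in_set_conv_nth le_add1 length_sorted_list_of_set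
      plus_1_eq_Suc set_sorted_list_of_set)

lemma ith_le_iff_le_card:
  assumes J: "finite J" and a: "a \<in> {1..card J}"
  shows "ith J a \<le> j \<longleftrightarrow> a \<le> card {i\<in>J. i \<le> j}"
proof -
  have mono: "strict_mono_on {1..card J} (ith J)" using strict_mono_on_ith[OF J] .
  show ?thesis
  proof
    assume "ith J a \<le> j"
    moreover have "ith J b \<le> ith J a" "ith J b \<in> J" if "b \<in> {1..a}" for b
      using that a ith_mem[OF J, of b] strict_mono_on_less_eq[OF mono, of b a] by auto
    ultimately have "ith J ` {1..a} \<subseteq> {i\<in>J. i \<le> j}" by force
    moreover have "inj_on (ith J) {1..a}"
      using a by (auto intro: inj_on_subset[OF strict_mono_on_imp_inj_on[OF mono]])
    ultimately show "a \<le> card {i\<in>J. i \<le> j}"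
      using card_inj_on_le[of "ith J" "{1..a}" "{i\<in>J. i \<le> j}"] by simp
  next
    assume card: "a \<le> card {i\<in>J. i \<le> j}"
    show "ith J a \<le> j"
    proof (rule ccontr)
      assume "\<not> ith J a \<le> j"
      have "{i\<in>J. i \<le> j} \<subseteq> ith J ` {1..a - 1}"
      proof
        fix i assume i: "i \<in> {i\<in>J. i \<le> j}"
        then obtain b where b: "b \<in> {1..card J}" "ith J b = i" using ith_surj[OF J] by blast
        then have "b < a"
          using i \<open>\<not> ith J a \<le> j\<close> strict_mono_on_less_eq[OF mono a b(1)] by auto
        then show "i \<in> ith J ` {1..a - 1}" using b by auto
      qed
      then have "card {i\<in>J. i \<le> j} \<le> card (ith J ` {1..a - 1})"
        by (intro card_mono) auto
      also have "\<dots> \<le> a - 1"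
        using card_image_le[of "{1..a - 1}" "ith J"] by simp
      finally show False using card a by auto
    qed
  qed
qed

lemma le_card_le_ith: "finite J \<Longrightarrow> a \<in> {1..card J} \<Longrightarrow> a \<le> card {i\<in>J. i \<le> ith J a}"
  using ith_le_iff_le_card by blast

lemma ith_image:
  fixes g :: "nat \<Rightarrow> nat"
  assumes S: "finite S" and g: "strict_mono_on S g" and a: "a \<in> {1..card S}"
  shows "ith (g ` S) a = g (ith S a)"
proof -
  have inj: "inj_on g S" using strict_mono_on_imp_inj_on[OF g] .
  have gS: "finite (g ` S)" "a \<in> {1..card (g ` S)}" using S a card_image[OF inj] by auto
  have count: "card {y\<in>g ` S. y \<le> g s} = card {t\<in>S. t \<le> s}" if "s \<in> S" for s
  proof -
    have "{y\<in>g ` S. y \<le> g s} = g ` {t\<in>S. t \<le> s}"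
      using that strict_mono_on_less_eq[OF g] by auto
    then show ?thesis using inj by (simp add: card_image inj_on_subset)
  qed
  have aS: "ith S a \<in> S" using ith_mem[OF S a] .
  have "ith (g ` S) a \<le> g (ith S a)"
    using ith_le_iff_le_card[OF gS] le_card_le_ith[OF S a] count[OF aS] by simp
  moreover have "g (ith S a) \<le> ith (g ` S) a"
  proof -
    obtain s where s: "s \<in> S" "ith (g ` S) a = g s" using ith_mem[OF gS] by blast
    then have "a \<le> card {t\<in>S. t \<le> s}"
      using le_card_le_ith[OF gS] count by simp
    then have "ith S a \<le> s" using ith_le_iff_le_card[OF S a] by simp
    then show ?thesis using s strict_mono_on_less_eq[OF g aS] by simp
  qed
  ultimately show ?thesis by simp
qed

lemma card_le_ith_image:
  assumes J: "finite J" and P: "P \<subseteq> {1..card J}"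
  shows "card {i\<in>ith J ` P. i \<le> j} = card {p\<in>P. p \<le> card {i\<in>J. i \<le> j}}"
proof -
  have "{i\<in>ith J ` P. i \<le> j} = ith J ` {p\<in>P. p \<le> card {i\<in>J. i \<le> j}}"
    using ith_le_iff_le_card[OF J] P by auto
  moreover have "inj_on (ith J) {p\<in>P. p \<le> card {i\<in>J. i \<le> j}}"
    by (rule inj_on_subset[OF strict_mono_on_imp_inj_on[OF strict_mono_on_ith[OF J]]]) (use P in auto)
  ultimately show ?thesis by (simp add: card_image)
qed

lemma ith_bound_iff_card_bound:
  fixes f :: "nat \<Rightarrow> nat"
  assumes J: "finite J" "J \<subseteq> {..n}" and f: "mono_on {..n} f"
  shows "(\<forall>a\<in>{1..card J}. a \<le> f (ith J a)) \<longleftrightarrow> (\<forall>j\<le>n. card {i\<in>J. i \<le> j} \<le> f j)"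
proof
  assume bound: "\<forall>a\<in>{1..card J}. a \<le> f (ith J a)"
  show "\<forall>j\<le>n. card {i\<in>J. i \<le> j} \<le> f j"
  proof (intro allI impI)
    fix j assume j: "j \<le> n"
    define b where "b = card {i\<in>J. i \<le> j}"
    show "b \<le> f j"
    proof (cases "b = 0")
      case False
      have "b \<le> card J" unfolding b_def using J by (intro card_mono) auto
      then have b: "b \<in> {1..card J}" using False by simp
      then have "ith J b \<le> j" using ith_le_iff_le_card[OF J(1)] b_def by simp
      then have "f (ith J b) \<le> f j" using j by (intro mono_onD[OF f]) auto
      then show ?thesis using bound b by fastforce
    qed simp
  qed
next
  assume bound: "\<forall>j\<le>n. card {i\<in>J. i \<le> j} \<le> f j"
  show "\<forall>a\<in>{1..card J}. a \<le> f (ith J a)"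
  proof
    fix a assume a: "a \<in> {1..card J}"
    have "a \<le> card {i\<in>J. i \<le> ith J a}" using le_card_le_ith[OF J(1) a] .
    also have "\<dots> \<le> f (ith J a)" using bound ith_mem[OF J(1) a] J(2) by auto
    finally show "a \<le> f (ith J a)" .
  qed
qed

lemma ith_image_card_bound:
  fixes f :: "nat \<Rightarrow> nat"
  assumes J: "finite J" "J \<subseteq> {..n}" and P: "P \<subseteq> {1..card J}" and f: "mono_on {..n} f"
    and bound: "\<And>a. a \<in> {1..card P} \<Longrightarrow> a \<le> f (ith J (ith P a))" and j: "j \<le> n"
  shows "card {p\<in>P. p \<le> card {i\<in>J. i \<le> j}} \<le> f j"
proof -
  have finP: "finite P" using P finite_subset by blast
  have mono: "strict_mono_on P (ith J)"
    using monotone_on_subset[OF strict_mono_on_ith[OF J(1)] P] .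
  have "card (ith J ` P) = card P" using card_image[OF strict_mono_on_imp_inj_on[OF mono]] .
  then have "\<forall>a\<in>{1..card (ith J ` P)}. a \<le> f (ith (ith J ` P) a)"
    using bound ith_image[OF finP mono] by simp
  moreover have "ith J ` P \<subseteq> {..n}" using ith_mem[OF J(1)] P J(2) by blast
  ultimately have "card {i\<in>ith J ` P. i \<le> j} \<le> f j"
    using ith_bound_iff_card_bound[of "ith J ` P" n f] finP f j by blast
  then show ?thesis using card_le_ith_image[OF J(1) P] by simp
qed

lemma card_le_add_card_le_complement:
  assumes "I \<subseteq> {1..n}" "j \<le> n"
  shows "card {i\<in>I. i \<le> j} + card {i\<in>{1..n} - I. i \<le> j} = j"
proof -
  have "{i\<in>I. i \<le> j} \<union> {i\<in>{1..n} - I. i \<le> j} = {1..j}" using assms by auto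
  moreover have "{i\<in>I. i \<le> j} \<inter> {i\<in>{1..n} - I. i \<le> j} = {}" by auto
  ultimately show ?thesis
    using card_Un_disjoint[of "{i\<in>I. i \<le> j}" "{i\<in>{1..n} - I. i \<le> j}"] by simp
qed

lemma add_card_le_diff_mono:
  fixes P :: "nat set"
  assumes "e \<le> e'" "e' \<le> j"
  shows "e + card {p\<in>P. p \<le> j - e} \<le> e' + card {p\<in>P. p \<le> j - e'}"
proof -
  have "{p\<in>P. p \<le> j - e} \<subseteq> {p\<in>P. p \<le> j - e'} \<union> {j - e'<..j - e}" by auto
  then have "card {p\<in>P. p \<le> j - e} \<le> card ({p\<in>P. p \<le> j - e'} \<union> {j - e'<..j - e})"
    by (intro card_mono) auto
  also have "\<dots> \<le> card {p\<in>P. p \<le> j - e'} + (e' - e)"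
    using card_Un_le[of "{p\<in>P. p \<le> j - e'}" "{j - e'<..j - e}"] assms by simp
  finally show ?thesis using assms by simp
qed

lemma idx_plus_split:
  assumes I: "I \<subseteq> {1..n}" and P: "P \<subseteq> {1..n - card I}"
  shows "idx_plus n I P = I \<union> ith ({1..n} - I) ` P" "I \<inter> ith ({1..n} - I) ` P = {}"
    "idx_plus n I P \<subseteq> {1..n}" "card (idx_plus n I P) = card I + card P"
proof -
  have "card ({1..n} - I) = n - card I" using card_Diff_subset[OF finite_subset[OF I] I] by simp
  then have P': "P \<subseteq> {1..card ({1..n} - I)}" using P by simp
  then show "idx_plus n I P = I \<union> ith ({1..n} - I) ` P" "I \<inter> ith ({1..n} - I) ` P = {}"
    "idx_plus n I P \<subseteq> {1..n}"
    using I ith_mem[of "{1..n} - I"] unfolding idx_plus_def by auto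
  moreover have "card (ith ({1..n} - I) ` P) = card P"
    using card_image[OF inj_on_subset[OF strict_mono_on_imp_inj_on[OF strict_mono_on_ith] P']] by simp
  ultimately show "card (idx_plus n I P) = card I + card P"
    using card_Un_disjoint[of I "ith ({1..n} - I) ` P"] finite_subset[OF I] finite_subset[OF P]
    by simp
qed

lemma card_le_idx_plus:
  assumes I: "I \<subseteq> {1..n}" and P: "P \<subseteq> {1..n - card I}" and j: "j \<le> n"
  shows "card {i\<in>idx_plus n I P. i \<le> j} = card {i\<in>I. i \<le> j} + card {p\<in>P. p \<le> j - card {i\<in>I. i \<le> j}}"
proof -
  let ?Q = "ith ({1..n} - I) ` P"
  have "{i\<in>idx_plus n I P. i \<le> j} = {i\<in>I. i \<le> j} \<union> {i\<in>?Q. i \<le> j}"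
    using idx_plus_split(1)[OF I P] by auto
  moreover have "finite (idx_plus n I P)" using idx_plus_split(3)[OF I P] finite_subset by blast
  ultimately have "card {i\<in>idx_plus n I P. i \<le> j} = card {i\<in>I. i \<le> j} + card {i\<in>?Q. i \<le> j}"
    using card_Un_disjoint[of "{i\<in>I. i \<le> j}" "{i\<in>?Q. i \<le> j}"] idx_plus_split(1,2)[OF I P]
    by auto
  moreover have "card {i\<in>{1..n} - I. i \<le> j} = j - card {i\<in>I. i \<le> j}"
    using card_le_add_card_le_complement[OF I j] by linarith
  moreover have "card ({1..n} - I) = n - card I" using card_Diff_subset[OF finite_subset[OF I] I] by simp
  ultimately show ?thesis using card_le_ith_image[of "{1..n} - I" P j] P by simp
qed

section \<open>Dimension inequalities\<close>

context finite_dimensional_vector_space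
begin

lemma dim_Int_increase_le:
  assumes S: "subspace S" and A: "subspace A" and B: "subspace B" and AB: "A \<subseteq> B"
  shows "dim (S \<inter> B) + dim A \<le> dim (S \<inter> A) + dim B"
proof -
  have "dim {x + y |x y. x \<in> S \<inter> B \<and> y \<in> A} + dim (S \<inter> B \<inter> A) = dim (S \<inter> B) + dim A"
    using dim_sums_Int[OF subspace_inter[OF S B] A] .
  moreover have "S \<inter> B \<inter> A = S \<inter> A" using AB by blast
  moreover have "{x + y |x y. x \<in> S \<inter> B \<and> y \<in> A} \<subseteq> B"
    using B AB subspace_add by blast
  then have "dim {x + y |x y. x \<in> S \<inter> B \<and> y \<in> A} \<le> dim B" by (rule dim_subset)
  ultimately show ?thesis by simp
qed

lemma dim_Int_span_Un_le:
  assumes Z: "subspace Z" and U: "subspace U" and G: "subspace G" and UZ: "U \<subseteq> Z"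
  shows "dim (Z \<inter> span (U \<union> G)) + dim (U \<inter> G) \<le> dim (Z \<inter> G) + dim U"
proof -
  have "Z \<inter> span (U \<union> G) \<subseteq> {u + w |u w. u \<in> U \<and> w \<in> Z \<inter> G}"
  proof
    fix z assume z: "z \<in> Z \<inter> span (U \<union> G)"
    have spans: "span U = U" "span G = G" using U G by simp_all
    obtain u w where uw: "u \<in> U" "w \<in> G" "z = u + w"
      using z span_Un[of U G, unfolded spans] by blast
    then have "w \<in> Z" using z UZ subspace_diff[OF Z, of z u] by auto
    then show "z \<in> {u + w |u w. u \<in> U \<and> w \<in> Z \<inter> G}" using uw by blast
  qed
  then have "dim (Z \<inter> span (U \<union> G)) \<le> dim {u + w |u w. u \<in> U \<and> w \<in> Z \<inter> G}"
    by (rule dim_subset)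
  moreover have "U \<inter> (Z \<inter> G) = U \<inter> G" using UZ by blast
  then have "dim {u + w |u w. u \<in> U \<and> w \<in> Z \<inter> G} + dim (U \<inter> G) = dim U + dim (Z \<inter> G)"
    using dim_sums_Int[OF U subspace_inter[OF Z G]] by simp
  ultimately show ?thesis by linarith
qed

end

section \<open>Complete flags and Schubert conditions\<close>

lemma complete_flag_mono:
  assumes "complete_flag n F" "i \<le> j" "j \<le> n"
  shows "F i \<subseteq> F j"
  by (rule lift_Suc_mono_le_ivl[of "{..<n}"]) (use assms in \<open>auto simp: complete_flag_def\<close>)

lemma complete_flag_subspace: "complete_flag n F \<Longrightarrow> i \<le> n \<Longrightarrow> vec.subspace (F i)"
  unfolding complete_flag_def by auto

lemma complete_flag_dim: "complete_flag n F \<Longrightarrow> i \<le> n \<Longrightarrow> vec.dim (F i) = i"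
  unfolding complete_flag_def by auto

lemma dim_Int_flag_Suc:
  assumes F: "complete_flag n F" and U: "vec.subspace U" and j: "j < n"
  shows "vec.dim (U \<inter> F (Suc j)) = vec.dim (U \<inter> F j) + (if Suc j \<in> jumps F n U then 1 else 0)"
proof -
  have sub': "F j \<subseteq> F (Suc j)" using complete_flag_mono[OF F, of j "Suc j"] j by simp
  then have sub: "U \<inter> F j \<subseteq> U \<inter> F (Suc j)" by auto
  have "vec.dim (U \<inter> F (Suc j)) + j \<le> vec.dim (U \<inter> F j) + Suc j"
    using vec.dim_Int_increase_le[OF U complete_flag_subspace[OF F, of j]
        complete_flag_subspace[OF F, of "Suc j"] sub']
      complete_flag_dim[OF F, of j] complete_flag_dim[OF F, of "Suc j"] j
    by simp
  moreover have "vec.dim (U \<inter> F j) < vec.dim (U \<inter> F (Suc j))" if "Suc j \<in> jumps F n U"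
  proof (rule vec.dim_psubset)
    have spans: "vec.span (U \<inter> F j) = U \<inter> F j" "vec.span (U \<inter> F (Suc j)) = U \<inter> F (Suc j)"
      using vec.subspace_inter[OF U complete_flag_subspace[OF F]] j by auto
    show "vec.span (U \<inter> F j) \<subset> vec.span (U \<inter> F (Suc j))"
      unfolding spans using that sub unfolding jumps_def by auto
  qed
  moreover have "U \<inter> F (Suc j) = U \<inter> F j" if "Suc j \<notin> jumps F n U"
    using that j unfolding jumps_def by auto
  ultimately show ?thesis by fastforce
qed

lemma dim_Int_flag_eq_card_jumps:
  assumes F: "complete_flag n F" and U: "vec.subspace U"
  shows "j \<le> n \<Longrightarrow> vec.dim (U \<inter> F j) = card {i\<in>jumps F n U. i \<le> j}"
proof (induction j)
  case 0
  have "U \<inter> F 0 = {0}" using F U vec.subspace_0 unfolding complete_flag_def by auto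
  moreover have "{i\<in>jumps F n U. i \<le> 0} = {}" unfolding jumps_def by auto
  ultimately show ?case by (simp add: vec.dim_insert)
next
  case (Suc j)
  have "{i\<in>jumps F n U. i \<le> Suc j} =
      {i\<in>jumps F n U. i \<le> j} \<union> (if Suc j \<in> jumps F n U then {Suc j} else {})"
    by (auto simp: le_Suc_eq)
  then show ?case using Suc dim_Int_flag_Suc[OF F U, of j] by simp
qed

lemma card_jumps:
  assumes F: "complete_flag n F" and U: "vec.subspace U"
  shows "card (jumps F n U) = vec.dim U"
proof -
  have "{i\<in>jumps F n U. i \<le> n} = jumps F n U" unfolding jumps_def by auto
  moreover have "F n = UNIV" using F unfolding complete_flag_def by blast
  ultimately show ?thesis using dim_Int_flag_eq_card_jumps[OF F U, of n] by simp
qed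

lemma mono_on_dim_Int_flag:
  assumes "complete_flag n F"
  shows "mono_on {..n} (\<lambda>j. vec.dim (L \<inter> F j))"
  by (intro mono_onI vec.dim_subset) (use complete_flag_mono[OF assms] in auto)

lemma schubert_iff_card_le:
  assumes F: "complete_flag n F" and J: "J \<subseteq> {1..n}"
  shows "schubert F J k L \<longleftrightarrow> card J = k \<and> vec.subspace L \<and> vec.dim L = k \<and>
    (\<forall>j\<le>n. card {i\<in>J. i \<le> j} \<le> vec.dim (L \<inter> F j))"
proof -
  have fin: "finite J" using J finite_subset by blast
  have "J \<subseteq> {..n}" using J by auto
  then have "(\<forall>a\<in>{1..card J}. a \<le> vec.dim (L \<inter> F (ith J a))) \<longleftrightarrow>
      (\<forall>j\<le>n. card {i\<in>J. i \<le> j} \<le> vec.dim (L \<inter> F j))"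
    using ith_bound_iff_card_bound[OF fin _ mono_on_dim_Int_flag[OF F]] by blast
  then show ?thesis unfolding schubert_def using fin by auto
qed

lemma schubert_card_le_card_jumps:
  assumes F: "complete_flag n F" and I: "I \<subseteq> {1..n}" and U: "schubert F I r U" and j: "j \<le> n"
  shows "card {i\<in>I. i \<le> j} \<le> card {i\<in>jumps F n U. i \<le> j}"
  using U j dim_Int_flag_eq_card_jumps[OF F, of U j] unfolding schubert_iff_card_le[OF F I] by auto

lemma schubert_flagU_card_le:
  assumes F: "complete_flag n F" and U: "vec.subspace U" and X: "X \<subseteq> U"
    and P: "P \<subseteq> {1..vec.dim U}" and XP: "schubert (flagU F n U) P x X" and j: "j \<le> n"
  shows "card {p\<in>P. p \<le> card {i\<in>jumps F n U. i \<le> j}} \<le> vec.dim (X \<inter> F j)"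
proof (rule ith_image_card_bound[OF _ _ _ mono_on_dim_Int_flag[OF F] _ j])
  show "finite (jumps F n U)" "jumps F n U \<subseteq> {..n}" unfolding jumps_def by auto
  show "P \<subseteq> {1..card (jumps F n U)}" using P card_jumps[OF F U] by simp
  fix a assume "a \<in> {1..card P}"
  moreover have "X \<inter> (G \<inter> U) = X \<inter> G" for G using X by blast
  ultimately show "a \<le> vec.dim (X \<inter> F (ith (jumps F n U) (ith P a)))"
    using XP unfolding schubert_def flagU_def by auto
qed

lemma schubert_quot_flagW_pre_card_le:
  assumes F: "complete_flag n F" and U: "vec.subspace U"
    and P: "P \<subseteq> {1..n - vec.dim U}" and ZP: "schubert_quot U (flagW_pre F n U) P y Z" and j: "j \<le> n"
  shows "card {p\<in>P. p \<le> card {i\<in>{1..n} - jumps F n U. i \<le> j}} \<le>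
    vec.dim (Z \<inter> vec.span (U \<union> F j)) - vec.dim U"
proof (rule ith_image_card_bound[OF _ _ _ _ _ j])
  have "jumps F n U \<subseteq> {1..n}" unfolding jumps_def by auto
  then have "card ({1..n} - jumps F n U) = n - vec.dim U"
    using card_Diff_subset[of "jumps F n U" "{1..n}"] card_jumps[OF F U] finite_subset by auto
  then show "P \<subseteq> {1..card ({1..n} - jumps F n U)}" using P by simp
  show "mono_on {..n} (\<lambda>j. vec.dim (Z \<inter> vec.span (U \<union> F j)) - vec.dim U)"
    by (intro mono_onI diff_le_mono vec.dim_subset Int_mono vec.span_mono Un_mono)
      (use complete_flag_mono[OF F] in auto)
  fix a assume "a \<in> {1..card P}"
  then show "a \<le> vec.dim (Z \<inter> vec.span (U \<union> F (ith ({1..n} - jumps F n U) (ith P a)))) - vec.dim U"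
    using ZP unfolding schubert_quot_def flagW_pre_def by auto
qed auto

lemma schubert_idx_sub:
  assumes F: "complete_flag n F" and I: "I \<subseteq> {1..n}" and U: "schubert F I r U"
    and X: "X \<subseteq> U" and P: "P \<subseteq> {1..r}" and XP: "schubert (flagU F n U) P x X"
  shows "schubert F (idx_sub I P) x X"
proof -
  let ?H = "jumps F n U"
  have finI: "finite I" and cI: "card I = r" and sU: "vec.subspace U" and dU: "vec.dim U = r"
    using U unfolding schubert_def by auto
  have IP: "ith I ` P \<subseteq> {1..n}" using ith_mem[OF finI] P cI I by blast
  have "card {i\<in>ith I ` P. i \<le> j} \<le> vec.dim (X \<inter> F j)" if j: "j \<le> n" for j
  proof -
    have "card {i\<in>ith I ` P. i \<le> j} = card {p\<in>P. p \<le> card {i\<in>I. i \<le> j}}"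
      using card_le_ith_image[OF finI] P cI by simp
    also have "\<dots> \<le> card {p\<in>P. p \<le> card {i\<in>?H. i \<le> j}}"
      using schubert_card_le_card_jumps[OF F I U j] P by (intro card_mono) auto
    also have "\<dots> \<le> vec.dim (X \<inter> F j)"
      using schubert_flagU_card_le[OF F sU X _ XP j] P dU by simp
    finally show ?thesis .
  qed
  moreover have "card (ith I ` P) = x"
    using XP P cI card_image[OF inj_on_subset[OF strict_mono_on_imp_inj_on[OF strict_mono_on_ith[OF finI]]]]
    unfolding schubert_def by auto
  moreover have "vec.subspace X" "vec.dim X = x" using XP unfolding schubert_def by auto
  ultimately show ?thesis unfolding idx_sub_def schubert_iff_card_le[OF F IP] by blast
qed

lemma schubert_idx_plus:
  assumes F: "complete_flag n F" and I: "I \<subseteq> {1..n}" and U: "schubert F I r U"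
    and P: "P \<subseteq> {1..n - r}" and ZP: "schubert_quot U (flagW_pre F n U) P y Z"
  shows "schubert F (idx_plus n I P) (r + y) Z"
proof -
  let ?H = "jumps F n U"
  have sU: "vec.subspace U" and dU: "vec.dim U = r" and cI: "card I = r"
    using U unfolding schubert_def by auto
  have P': "P \<subseteq> {1..n - card I}" using P cI by simp
  have H: "?H \<subseteq> {1..n}" unfolding jumps_def by auto
  have cP: "card P = y" and sZ: "vec.subspace Z" and UZ: "U \<subseteq> Z" and dZ: "vec.dim Z = r + y"
    using ZP vec.dim_subset[of U Z] dU unfolding schubert_quot_def by auto
  have "card {i\<in>idx_plus n I P. i \<le> j} \<le> vec.dim (Z \<inter> F j)" if j: "j \<le> n" for j
  proof -
    let ?eI = "card {i\<in>I. i \<le> j}" and ?eH = "card {i\<in>?H. i \<le> j}"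
    have eH: "card {i\<in>{1..n} - ?H. i \<le> j} = j - ?eH" "?eH \<le> j"
      using card_le_add_card_le_complement[OF H j] by linarith+
    have "card {i\<in>idx_plus n I P. i \<le> j} = ?eI + card {p\<in>P. p \<le> j - ?eI}"
      using card_le_idx_plus[OF I P' j] .
    also have "\<dots> \<le> ?eH + card {p\<in>P. p \<le> j - ?eH}"
      using add_card_le_diff_mono schubert_card_le_card_jumps[OF F I U j] eH(2) by simp
    also have "\<dots> \<le> vec.dim (U \<inter> F j) + (vec.dim (Z \<inter> vec.span (U \<union> F j)) - vec.dim U)"
      using schubert_quot_flagW_pre_card_le[OF F sU _ ZP j] P dU
        dim_Int_flag_eq_card_jumps[OF F sU j] eH(1) by simp
    also have "\<dots> \<le> vec.dim (Z \<inter> F j)"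
    proof -
      have "vec.dim U \<le> vec.dim (Z \<inter> vec.span (U \<union> F j))"
        using UZ vec.span_superset[of "U \<union> F j"] by (intro vec.dim_subset) auto
      then show ?thesis
        using vec.dim_Int_span_Un_le[OF sZ sU complete_flag_subspace[OF F j] UZ] by linarith
    qed
    finally show ?thesis .
  qed
  moreover have "card (idx_plus n I P) = r + y"
    using idx_plus_split(4)[OF I P'] cI cP by simp
  ultimately show ?thesis
    unfolding schubert_iff_card_le[OF F idx_plus_split(3)[OF I P']] using sZ dZ by blast
qed

theorem lemma2:
  fixes F :: "nat \<Rightarrow> (complex^'n) set" and U :: "(complex^'n) set"
    and n r :: nat and I :: "nat set"
  assumes "n = CARD('n)"
    and "complete_flag n F"
    and "I \<subseteq> {1..n}"
    and "schubert F I r U"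
  shows "(\<forall>(X :: (complex^'n) set) P x.
            X \<subseteq> U \<and> P \<subseteq> {1..r} \<and> card P = x \<and> schubert (flagU F n U) P x X
            \<longrightarrow> schubert F (idx_sub I P) x X)
       \<and> (\<forall>(Z :: (complex^'n) set) P y.
            P \<subseteq> {1..n - r} \<and> card P = y \<and> schubert_quot U (flagW_pre F n U) P y Z
            \<longrightarrow> schubert F (idx_plus n I P) (r + y) Z)"
  using schubert_idx_sub[OF assms(2-4)] schubert_idx_plus[OF assms(2-4)] by blast

end
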